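(* Let $q$ be a power of an odd prime $p$, let $b\in\mathbb{F}_q$ with $b\ne0$, and let $n\ge2$ be an integer. Let $r\ge0$ be such that $p^r$ divides $n+1$ but $p^{r+1}$ does not, and let $m\ge0$ be defined by $n+1=p^r(m+1)$. Assume $r\ge1$, and assume: if $q\equiv1\pmod4$ then $\gcd(m+1,(q^2-1)/2)=1$; if $q\equiv3\pmod4$ then $\gcd(m+1,(q^4-1)/2)$ divides $(q-1)/2$. Let $\mu\in\mathbb{F}_{q^2}$ with $\mu^2=-1$. Then $\hat C_n(a,b)$ is LCD for every $a\in\mathbb{F}_q\setminus\{\mu+2b,\,\mu-2b,\,-\mu+2b,\,-\mu-2b\}$.
   Context: For $a,b\in\mathbb{F}_q$ and $n\ge 2$, $\hat T_n(a,b)$ denotes the $n\times n$ symmetric tridiagonal Toeplitz matrix over $\mathbb{F}_q$ with all diagonal entries equal to $a$, all entries on the first super- and sub-diagonals equal to $b$, and all other entries $0$. $\hat C_n(a,b)$ is the $[2n,n]$ linear code over $\mathbb{F}_q$ with generator matrix $[I_n\mid \hat T_n(a,b)]$. A linear code $C$ is LCD if $C\cap C^\perp=\{0\}$ (Euclidean dual). *)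

theory Defs
  imports "Jordan_Normal_Form.Matrix"
begin

definition T_hat :: "nat \<Rightarrow> 'a::field \<Rightarrow> 'a \<Rightarrow> 'a mat" where
  "T_hat n a b = mat n n (\<lambda>(i,j). if i = j then a else if i = j + 1 \<or> j = i + 1 then b else 0)"

definition G_hat :: "nat \<Rightarrow> 'a::field \<Rightarrow> 'a \<Rightarrow> 'a mat" where
  "G_hat n a b = mat n (2*n) (\<lambda>(i,j). if j < n then (if i = j then 1 else 0) else T_hat n a b $$ (i, j - n))"

definition row_code :: "'a::field mat \<Rightarrow> 'a vec set" where
  "row_code G = {transpose_mat G *\<^sub>v u | u. u \<in> carrier_vec (dim_row G)}"

definition C_hat :: "nat \<Rightarrow> 'a::field \<Rightarrow> 'a \<Rightarrow> 'a vec set" where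
  "C_hat n a b = row_code (G_hat n a b)"

definition dual_code :: "nat \<Rightarrow> 'a::field vec set \<Rightarrow> 'a vec set" where
  "dual_code N C = {v \<in> carrier_vec N. \<forall>c\<in>C. scalar_prod v c = 0}"

definition is_LCD :: "nat \<Rightarrow> 'a::field vec set \<Rightarrow> bool" where
  "is_LCD N C \<longleftrightarrow> C \<inter> dual_code N C = {0\<^sub>v N}"

end

theory Submission
  imports
    Defs
    "Jordan_Normal_Form.Char_Poly"
    "HOL-Algebra.Algebraic_Closure_Type"
    "HOL-Number_Theory.Residues"
begin

(*
  The code is LCD iff G G^T = I + T^2 is nonsingular, and over an algebraic closure
  I + T^2 = (T - \<mu>)(T + \<mu>); so it suffices that neither \<mu> nor -\<mu> is an eigenvalue
  of T = T_n(a,b).  For an eigenvalue \<lambda> write (\<lambda> - a)/b = t + 1/t.  The eigenvector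
  equations form a Chebyshev-type recurrence whose solution vanishes at index n only if
  t^(2(n+1)) = 1, hence t^(2(m+1)) = 1, since p^r-th powers are injective.  Frobenius now
  pins t down.  If q = 1 mod 4, then \<lambda> is in F_q and t^(q^2-1) = 1, so the gcd condition
  gives t^2 = 1, which the choice of a excludes.  If q = 3 mod 4, then t^(q^4-1) = 1 and the
  gcd condition forces t^q = t, hence \<lambda>^q = \<lambda>, contradicting \<lambda>^q = -\<lambda>.
*)

hide_const (open) Divisibility.prime
no_notation fps_nth (infixl "$" 75)

section \<open>Fields of prime characteristic\<close>

(* The library's finite_field_power_card_eq_same needs the sort finite_field, which a type
   variable of sort {finite,field} does not have; we derive it from the group of units. *)
lemma power_card_UNIV_eq_self:
  fixes x :: "'c::{finite,field}"
  shows "x ^ card (UNIV :: 'c set) = x"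
proof (cases "x = 0")
  case False
  let ?R = "ring_of_type_algebra :: 'c ring"
  interpret R: field ?R by (rule field_from_type_algebra)
  have units: "Units ?R = UNIV - {0}"
    by (auto simp: Units_def ring_of_type_algebra_def) (metis left_inverse right_inverse)
  have pow: "x [^]\<^bsub>?R\<^esub> j = x ^ j" for j :: nat
    by (induction j) (simp_all add: ring_of_type_algebra_def)
  have "x [^]\<^bsub>?R\<^esub> card (Units ?R) = \<one>\<^bsub>?R\<^esub>"
    using False by (intro R.units_power_order_eq_one) (simp_all add: units)
  then have "x ^ card (UNIV - {0 :: 'c}) = 1"
    by (simp only: units pow) (simp add: ring_of_type_algebra_def)
  moreover have "card (UNIV :: 'c set) = Suc (card (UNIV - {0 :: 'c}))"
    using finite_UNIV_card_ge_0[where 'a = 'c] by (simp add: card_Diff_singleton)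
  ultimately show ?thesis
    by (metis mult.right_neutral power_Suc)
qed (simp add: finite_UNIV_card_ge_0)

lemma power_gcd_eq_1:
  fixes t :: "'c::monoid_mult"
  assumes "t ^ i = 1" "t ^ j = 1"
  shows "t ^ gcd i j = 1"
proof (cases "i = 0")
  case False
  obtain x y where "i * x = j * y + gcd i j"
    using bezout_nat[OF False] by blast
  then have "t ^ (i * x) = t ^ (j * y) * t ^ gcd i j"
    by (simp add: power_add)
  then show ?thesis
    by (simp add: power_mult assms)
qed (use assms in simp)

lemma power_two_gcd_eq_1:
  fixes t :: "'c::field"
  assumes "t \<noteq> 0" "t ^ (M * M) = t" "t ^ (2 * N) = 1" "odd M"
  shows "t ^ (2 * gcd N ((M * M - 1) div 2)) = 1"
proof -
  have "t ^ (M * M - 1) = 1"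
    using assms(1,2) by (cases "M * M") auto
  then have "t ^ (2 * ((M * M - 1) div 2)) = 1"
    using assms(4) by simp
  then show ?thesis
    using power_gcd_eq_1[OF assms(3)] by (simp add: gcd_mult_distrib_nat)
qed

lemma freshmans_dream_diff:
  fixes x y :: "'c::field"
  assumes "prime CHAR('c)" "m = CHAR('c) ^ j"
  shows "(x - y) ^ m = x ^ m - y ^ m"
  using freshmans_dream'[OF assms, of "x - y" y] by simp

lemma eq_1_if_power_CHAR_power_eq_1:
  fixes z :: "'c::field"
  assumes "prime CHAR('c)" "z ^ (CHAR('c) ^ j) = 1"
  shows "z = 1"
proof -
  have "z ^ (CHAR('c) ^ j) = (z - 1) ^ (CHAR('c) ^ j) + 1 ^ (CHAR('c) ^ j)"
    using freshmans_dream'[OF assms(1) refl, of "z - 1" 1] by simp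
  then show ?thesis
    using assms(2) by simp
qed

lemma power_square_eq_self_if_inverse_sum_fixed:
  fixes t :: "'c::field"
  assumes "prime CHAR('c)" "m = CHAR('c) ^ j" "t \<noteq> 0"
    and "(t + inverse t) ^ m = t + inverse t"
  shows "t ^ (m * m) = t"
proof -
  define \<tau> where "\<tau> = t ^ m"
  have "\<tau> + inverse \<tau> = t + inverse t"
    using freshmans_dream'[OF assms(1,2)] assms(4) by (simp add: \<tau>_def power_inverse)
  then have "(\<tau> - t) * (\<tau> * t - 1) = 0"
    using assms(3) by (simp add: \<tau>_def field_simps)
  then have "\<tau> = t \<or> \<tau> = inverse t"
    by (metis inverse_unique mult.commute right_minus_eq mult_eq_0_iff)
  then show ?thesis
    by (auto simp: \<tau>_def power_mult power_inverse)
qed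

lemma square_eq_1_if_inverse_sum_fixed:
  fixes t :: "'c::field"
  assumes "prime CHAR('c)" "q = CHAR('c) ^ k" "odd q"
    and "t \<noteq> 0" "t ^ (2 * N) = 1" "(t + inverse t) ^ q = t + inverse t"
    and "gcd N ((q ^ 2 - 1) div 2) = 1"
  shows "t ^ 2 = 1"
proof -
  have "t ^ (q * q) = t"
    using power_square_eq_self_if_inverse_sum_fixed[OF assms(1,2,4,6)] .
  then show ?thesis
    using power_two_gcd_eq_1[OF assms(4) _ assms(5,3)] assms(7) by (simp add: power2_eq_square)
qed

lemma inverse_sum_fixed_if_fixed_by_square:
  fixes t :: "'c::field"
  assumes "prime CHAR('c)" "q = CHAR('c) ^ k" "odd q"
    and "t \<noteq> 0" "t ^ (2 * N) = 1" "(t + inverse t) ^ (q ^ 2) = t + inverse t"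
    and "gcd N ((q ^ 4 - 1) div 2) dvd (q - 1) div 2"
  shows "(t + inverse t) ^ q = t + inverse t"
proof -
  have "q ^ 2 = CHAR('c) ^ (2 * k)"
    using assms(2) by (simp add: power_mult[symmetric] mult.commute)
  then have "t ^ (q ^ 2 * q ^ 2) = t"
    using power_square_eq_self_if_inverse_sum_fixed[OF assms(1) _ assms(4,6)] by blast
  then have "t ^ (2 * gcd N ((q ^ 2 * q ^ 2 - 1) div 2)) = 1"
    using power_two_gcd_eq_1[OF assms(4) _ assms(5), of "q ^ 2"] assms(3) by simp
  then have t_gcd: "t ^ (2 * gcd N ((q ^ 4 - 1) div 2)) = 1"
    by (simp flip: power_add)
  have "2 * gcd N ((q ^ 4 - 1) div 2) dvd 2 * ((q - 1) div 2)"
    using assms(7) by (rule mult_dvd_mono[OF dvd_refl])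
  then obtain c where "q - 1 = 2 * gcd N ((q ^ 4 - 1) div 2) * c"
    using assms(3) by auto
  then have "t ^ (q - 1) = 1"
    using t_gcd by (simp add: power_mult)
  then have "t ^ q = t"
    using assms(3) by (cases q) auto
  then show ?thesis
    using freshmans_dream'[OF assms(1,2)] by (simp add: power_inverse)
qed

lemma CHAR_eq_if_card_eq_prime_power:
  assumes "prime p" "card (UNIV :: 'c::{finite,field} set) = p ^ j"
  shows "CHAR('c) = p"
proof -
  have "prime CHAR('c)"
    using finite_imp_CHAR_pos[where 'a = 'c] prime_CHAR_semidom by auto
  moreover have "CHAR('c) dvd p ^ j"
    using CHAR_dvd_CARD[where 'a = 'c] assms(2) by simp
  ultimately show ?thesis
    using assms(1) prime_dvd_power primes_dvd_imp_eq by blast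
qed

lemma inverse_sum_eqE:
  fixes w :: "'c::alg_closed_field"
  obtains t where "t \<noteq> 0" "t + inverse t = w"
proof -
  obtain t where root: "poly [:1, - w, 1:] t = 0"
    using alg_closed_imp_poly_has_root[of "[:1, - w, 1:]"] by auto
  then have "t \<noteq> 0"
    by auto
  moreover have "t + inverse t = w"
    using root \<open>t \<noteq> 0\<close> by (simp add: field_simps)
  ultimately show ?thesis
    using that by blast
qed

section \<open>Symmetric tridiagonal Toeplitz matrices\<close>

lemma dim_T_hat [simp]: "dim_row (T_hat n a b) = n" "dim_col (T_hat n a b) = n"
  by (simp_all add: T_hat_def)

lemma T_hat_carrier_mat [simp]: "T_hat n a b \<in> carrier_mat n n"
  by (simp add: carrier_matI)

lemma (in field_hom) map_mat_T_hat: "map_mat hom (T_hat n a b) = T_hat n (hom a) (hom b)"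
  by (auto simp: T_hat_def)

lemma T_hat_mult_vec_nth:
  assumes "v \<in> carrier_vec n" "k < n"
  shows "(T_hat n a b *\<^sub>v v) $ k = (if k = 0 then 0 else b * v $ (k - 1)) + a * v $ k
    + (if k + 1 < n then b * v $ (k + 1) else 0)"
proof -
  have "(T_hat n a b *\<^sub>v v) $ k = row (T_hat n a b) k \<bullet> v"
    using assms by simp
  also have "\<dots> = (\<Sum>i<n. T_hat n a b $$ (k, i) * v $ i)"
    using assms unfolding scalar_prod_def by (auto simp: atLeast0LessThan intro!: sum.cong)
  also have "\<dots> = (\<Sum>i<n. (if i = k then a * v $ k else 0)
      + (if i = k - 1 then (if k = 0 then 0 else b * v $ (k - 1)) else 0)
      + (if i = k + 1 then b * v $ (k + 1) else 0))"
    using assms(2) by (intro sum.cong) (auto simp: T_hat_def)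
  also have "\<dots> = a * v $ k + (if k = 0 then 0 else b * v $ (k - 1))
      + (if k + 1 < n then b * v $ (k + 1) else 0)"
    using assms(2) by (auto simp: sum.distrib sum.If_cases)
  finally show ?thesis
    by (simp add: algebra_simps)
qed

lemma chebyshev_recurrence_closed_form:
  fixes W :: "nat \<Rightarrow> 'c::field"
  assumes "t \<noteq> 0"
    and W1: "W 1 = (t + inverse t) * W 0"
    and step: "\<And>k. k + 2 \<le> N \<Longrightarrow> W (k + 2) = (t + inverse t) * W (k + 1) - W k"
    and "k \<le> N"
  shows "W k * (t - inverse t) = W 0 * (t ^ (k + 1) - inverse t ^ (k + 1))"
  using \<open>k \<le> N\<close>
proof (induction k rule: less_induct)
  case (less k)
  consider "k = 0" | "k = 1" | j where "k = j + 2"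
    by (metis One_nat_def add_2_eq_Suc' not0_implies_Suc)
  then show ?case
  proof cases
    case 1
    then show ?thesis by simp
  next
    case 2
    then have "W k = (t + inverse t) * W 0"
      using W1 by simp
    then show ?thesis
      using \<open>t \<noteq> 0\<close> by (simp add: 2 field_simps power2_eq_square)
  next
    case 3
    have IH0: "W j * (t - inverse t) = W 0 * (t ^ (j + 1) - inverse t ^ (j + 1))"
      using less.IH[of j] less.prems 3 by simp
    have IH1: "W (j + 1) * (t - inverse t) = W 0 * (t ^ (j + 2) - inverse t ^ (j + 2))"
      using less.IH[of "j + 1"] less.prems 3 by simp
    have Wk: "W k = (t + inverse t) * W (j + 1) - W j"
      using step less.prems by (simp add: 3)
    have "W k * (t - inverse t)
        = (t + inverse t) * (W (j + 1) * (t - inverse t)) - W j * (t - inverse t)"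
      unfolding Wk by (simp add: algebra_simps)
    also have "\<dots> = W 0 * ((t + inverse t) * (t ^ (j + 2) - inverse t ^ (j + 2))
        - (t ^ (j + 1) - inverse t ^ (j + 1)))"
      unfolding IH0 IH1 by (simp add: algebra_simps)
    also have "(t + inverse t) * (t ^ (j + 2) - inverse t ^ (j + 2))
        - (t ^ (j + 1) - inverse t ^ (j + 1)) = t ^ (k + 1) - inverse t ^ (k + 1)"
      using \<open>t \<noteq> 0\<close> by (simp add: 3 field_simps)
    finally show ?thesis .
  qed
qed

lemma T_hat_eigenvector_recurrence:
  fixes a b l t :: "'c::field"
  assumes "v \<in> carrier_vec n" "T_hat n a b *\<^sub>v v = l \<cdot>\<^sub>v v" "b \<noteq> 0"
    and "t + inverse t = (l - a) / b"
  defines "W \<equiv> \<lambda>k. if k < n then v $ k else 0"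
  shows "W 1 = (t + inverse t) * W 0"
    and "k + 2 \<le> n \<Longrightarrow> W (k + 2) = (t + inverse t) * W (k + 1) - W k"
proof -
  have row: "(if k = 0 then 0 else b * W (k - 1)) + a * W k + b * W (k + 1) = l * W k"
    if "k < n" for k
  proof -
    have "(T_hat n a b *\<^sub>v v) $ k = l * v $ k"
      using assms(1,2) that by simp
    then show ?thesis
      using T_hat_mult_vec_nth[OF assms(1) that] that by (auto simp: W_def)
  qed
  show "W 1 = (t + inverse t) * W 0"
  proof (cases "n = 0")
    case False
    then have "b * W 1 = (l - a) * W 0"
      using row[of 0] by (simp add: algebra_simps)
    then have "W 1 = (l - a) / b * W 0"
      using assms(3) by (simp add: field_simps)
    then show ?thesis
      by (simp add: assms(4))
  qed (simp add: W_def)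
  show "W (k + 2) = (t + inverse t) * W (k + 1) - W k" if "k + 2 \<le> n"
  proof -
    have "b * W (k + 2) = (l - a) * W (k + 1) - b * W k"
      using row[of "k + 1"] that by (simp add: algebra_simps)
    then have "W (k + 2) = (l - a) / b * W (k + 1) - W k"
      using assms(3) by (simp add: field_simps)
    then show ?thesis
      by (simp add: assms(4))
  qed
qed

lemma T_hat_eigenvalue_imp_root_of_unity:
  fixes a b l t :: "'c::field"
  assumes "eigenvalue (T_hat n a b) l" "b \<noteq> 0" "t \<noteq> 0" "t ^ 2 \<noteq> 1"
    and "t + inverse t = (l - a) / b"
  shows "t ^ (2 * (n + 1)) = 1"
proof -
  obtain v where v: "v \<in> carrier_vec n" "v \<noteq> 0\<^sub>v n" "T_hat n a b *\<^sub>v v = l \<cdot>\<^sub>v v"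
    using assms(1) by (auto simp: eigenvalue_def eigenvector_def)
  define W where "W k = (if k < n then v $ k else 0)" for k
  note recurrence = T_hat_eigenvector_recurrence[OF v(1,3) assms(2,5), folded W_def]
  have closed: "W k * (t - inverse t) = W 0 * (t ^ (k + 1) - inverse t ^ (k + 1))"
    if "k \<le> n" for k
    using chebyshev_recurrence_closed_form[OF assms(3) recurrence that] by simp
  have "t - inverse t \<noteq> 0"
    using assms(3,4) by (auto simp: field_simps power2_eq_square)
  have "W 0 \<noteq> 0"
  proof
    assume "W 0 = 0"
    then have "v $ k = 0" if "k < n" for k
      using closed[of k] that \<open>t - inverse t \<noteq> 0\<close> by (simp add: W_def)
    then show False
      using v by auto
  qed
  moreover have "W 0 * (t ^ (n + 1) - inverse t ^ (n + 1)) = 0"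
    using closed[of n] by (simp add: W_def)
  ultimately have "t ^ (n + 1) * t ^ (n + 1) = 1"
    using assms(3) by (simp add: field_simps)
  then show ?thesis
    by (metis mult_2 power_add)
qed

lemma char_matrix_mult_char_matrix_uminus:
  fixes A :: "'c::field mat"
  assumes "A \<in> carrier_mat n n" "\<nu> ^ 2 = - 1"
  shows "char_matrix A \<nu> * char_matrix A (- \<nu>) = 1\<^sub>m n + A * A"
proof (rule eq_matI)
  fix i j assume "i < dim_row (1\<^sub>m n + A * A)" "j < dim_col (1\<^sub>m n + A * A)"
  then have ij: "i < n" "j < n"
    using assms(1) by auto
  have "(char_matrix A \<nu> * char_matrix A (- \<nu>)) $$ (i, j) = (\<Sum>k = 0..<n.
      (A $$ (i, k) - \<nu> * (if k = i then 1 else 0))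
      * (A $$ (k, j) + \<nu> * (if k = j then 1 else 0)))"
    using assms(1) ij by (auto simp: char_matrix_def scalar_prod_def intro!: sum.cong)
  also have "\<dots> = (\<Sum>k = 0..<n. A $$ (i, k) * A $$ (k, j)
      + (if k = j then \<nu> * A $$ (i, j) else 0) - (if k = i then \<nu> * A $$ (i, j) else 0)
      + (if k = i then (if i = j then 1 else 0) else 0))"
    using assms(2) by (intro sum.cong) (auto simp: algebra_simps power2_eq_square)
  also have "\<dots> = (1\<^sub>m n + A * A) $$ (i, j)"
    using assms(1) ij by (simp add: sum.distrib sum_subtractf scalar_prod_def)
  finally show "(char_matrix A \<nu> * char_matrix A (- \<nu>)) $$ (i, j)
    = (1\<^sub>m n + A * A) $$ (i, j)" .
qed (use assms in \<open>auto simp: char_matrix_def\<close>)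

lemma det_one_add_square_nonzero:
  fixes A :: "'c::field mat"
  assumes "A \<in> carrier_mat n n" "\<nu> ^ 2 = - 1"
    and "\<not> eigenvalue A \<nu>" "\<not> eigenvalue A (- \<nu>)"
  shows "det (1\<^sub>m n + A * A) \<noteq> 0"
  using assms det_mult[of "char_matrix A \<nu>" n "char_matrix A (- \<nu>)"]
  by (simp add: char_matrix_mult_char_matrix_uminus eigenvalue_det)

lemma (in field_hom) hom_det_one_add_square_T_hat:
  "det (1\<^sub>m n + T_hat n (hom a) (hom b) * T_hat n (hom a) (hom b))
    = hom (det (1\<^sub>m n + T_hat n a b * T_hat n a b))"
proof -
  have "map_mat hom (1\<^sub>m n + T_hat n a b * T_hat n a b)
      = 1\<^sub>m n + map_mat hom (T_hat n a b) * map_mat hom (T_hat n a b)"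
    by (rule eq_matI) (auto simp: hom_add mat_hom_mult[of _ n n _ n, symmetric])
  then show ?thesis
    by (simp add: map_mat_T_hat flip: hom_det)
qed

lemma power_odd_if_square_eq_minus_1:
  fixes l :: "'c::comm_ring_1"
  assumes "l ^ 2 = - 1" "odd q"
  shows "l ^ q = l * (- 1) ^ ((q - 1) div 2)"
proof -
  have "q = Suc (2 * ((q - 1) div 2))"
    using assms(2) by simp
  then show ?thesis
    by (metis assms(1) power_Suc power_mult)
qed

lemma CHAR_eq_2_if_eq_uminus:
  fixes l :: "'c::field"
  assumes "prime CHAR('c)" "l = - l" "l \<noteq> 0"
  shows "CHAR('c) = 2"
proof -
  have "of_nat 2 * l = 0"
    using assms(2) by (metis add.right_inverse mult_2 of_nat_numeral)
  then have "CHAR('c) dvd 2"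
    using assms(3) by (simp add: of_nat_eq_0_iff_char_dvd del: of_nat_numeral)
  then show ?thesis
    using assms(1) by (simp add: primes_dvd_imp_eq)
qed

lemma T_hat_eigenvalueE:
  fixes A B l :: "'c::alg_closed_field"
  assumes "eigenvalue (T_hat n A B) l" "prime CHAR('c)" "n + 1 = CHAR('c) ^ r * (m + 1)"
    and "B \<noteq> 0" "A \<notin> {l + 2 * B, l - 2 * B}"
  obtains t where "t \<noteq> 0" "t ^ 2 \<noteq> 1" "t + inverse t = (l - A) / B"
    and "t ^ (2 * (m + 1)) = 1"
proof -
  obtain t where t: "t \<noteq> 0" "t + inverse t = (l - A) / B"
    using inverse_sum_eqE .
  have "t ^ 2 \<noteq> 1"
  proof
    assume "t ^ 2 = 1"
    then have "t = 1 \<or> t = - 1"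
      by (simp add: power2_eq_1_iff)
    then have "(l - A) / B = 2 \<or> (l - A) / B = - 2"
      using t by auto
    then show False
      using assms(4,5) by (auto simp: field_simps)
  qed
  then have "t ^ (2 * (n + 1)) = 1"
    using T_hat_eigenvalue_imp_root_of_unity[OF assms(1,4) t(1)] t(2) by simp
  moreover have "2 * (m + 1) * CHAR('c) ^ r = 2 * (n + 1)"
    unfolding assms(3) by (simp only: mult_ac)
  ultimately have "(t ^ (2 * (m + 1))) ^ (CHAR('c) ^ r) = 1"
    by (simp only: power_mult[symmetric])
  then have "t ^ (2 * (m + 1)) = 1"
    by (rule eq_1_if_power_CHAR_power_eq_1[OF assms(2)])
  then show ?thesis
    using that t \<open>t ^ 2 \<noteq> 1\<close> by blast
qed

lemma T_hat_not_eigenvalue: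
  fixes A B \<nu> l :: "'c::alg_closed_field"
  assumes char: "prime CHAR('c)" and q: "q = CHAR('c) ^ k" "odd q"
    and A: "A ^ q = A" and B: "B ^ q = B" "B \<noteq> 0"
    and l: "l ^ 2 = - 1" "A \<notin> {l + 2 * B, l - 2 * B}"
    and n: "n + 1 = CHAR('c) ^ r * (m + 1)"
    and cond1: "q mod 4 = 1 \<Longrightarrow> gcd (m + 1) ((q ^ 2 - 1) div 2) = 1"
    and cond3: "q mod 4 = 3 \<Longrightarrow> gcd (m + 1) ((q ^ 4 - 1) div 2) dvd (q - 1) div 2"
  shows "\<not> eigenvalue (T_hat n A B) l"
proof
  assume "eigenvalue (T_hat n A B) l"
  then obtain t where t: "t \<noteq> 0" "t ^ 2 \<noteq> 1" "t + inverse t = (l - A) / B"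
    and t_root: "t ^ (2 * (m + 1)) = 1"
    using T_hat_eigenvalueE[OF _ char n B(2) l(2)] by blast
  define w where "w = (l - A) / B"
  have w_power: "w ^ q = (l ^ q - A) / B"
    using freshmans_dream_diff[OF char q(1)] by (simp add: w_def power_divide A B)
  have "q mod 4 = 1 \<or> q mod 4 = 3"
    using q(2) by presburger
  then consider "q mod 4 = 1" | "q mod 4 = 3"
    by blast
  then show False
  proof cases
    case 1
    then have "even ((q - 1) div 2)"
      by presburger
    then have "l ^ q = l"
      using power_odd_if_square_eq_minus_1[OF l(1) q(2)] by simp
    then have "w ^ q = w"
      unfolding w_power by (simp add: w_def)
    then have "t ^ 2 = 1"
      using square_eq_1_if_inverse_sum_fixed[OF char q t(1) t_root _ cond1[OF 1]] t(3)
      by (simp add: w_def)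
    then show False
      using t(2) by simp
  next
    case 2
    then have "odd ((q - 1) div 2)"
      by presburger
    then have l_q: "l ^ q = - l"
      using power_odd_if_square_eq_minus_1[OF l(1) q(2)] by simp
    have "w ^ (q ^ 2) = (w ^ q) ^ q"
      by (simp add: power2_eq_square power_mult)
    also have "\<dots> = w"
      unfolding w_power l_q using freshmans_dream_diff[OF char q(1)] q(2)
      by (simp add: power_divide l_q A B w_def)
    finally have "w ^ q = w"
      using inverse_sum_fixed_if_fixed_by_square[OF char q t(1) t_root _ cond3[OF 2]] t(3)
      by (simp add: w_def)
    then have "l = - l"
      unfolding w_power using B(2) l_q by (simp add: w_def)
    moreover have "l \<noteq> 0"
      using l(1) by auto
    ultimately have "CHAR('c) = 2"
      using CHAR_eq_2_if_eq_uminus[OF char] by blast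
    then show False
      using q 2 by (cases k) auto
  qed
qed

lemma det_one_add_square_T_hat_nonzero:
  fixes A B \<nu> :: "'c::alg_closed_field"
  assumes "prime p" "CHAR('c) = p" "odd p" "q = p ^ k" "n + 1 = p ^ r * (m + 1)"
    and "q mod 4 = 1 \<Longrightarrow> gcd (m + 1) ((q ^ 2 - 1) div 2) = 1"
    and "q mod 4 = 3 \<Longrightarrow> gcd (m + 1) ((q ^ 4 - 1) div 2) dvd (q - 1) div 2"
    and "A ^ q = A" "B ^ q = B" "B \<noteq> 0" "\<nu> ^ 2 = - 1"
    and "A \<notin> {\<nu> + 2 * B, \<nu> - 2 * B, - \<nu> + 2 * B, - \<nu> - 2 * B}"
  shows "det (1\<^sub>m n + T_hat n A B * T_hat n A B) \<noteq> 0"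
proof -
  have "\<not> eigenvalue (T_hat n A B) l" if "l = \<nu> \<or> l = - \<nu>" for l
    using assms that
    by (intro T_hat_not_eigenvalue[where q = q and k = k and r = r and m = m]) auto
  then show ?thesis
    using assms(11) by (intro det_one_add_square_nonzero) auto
qed

section \<open>LCD codes\<close>

lemma is_LCD_row_code_if_det_nonzero:
  fixes G :: "'c::field mat"
  assumes G: "G \<in> carrier_mat k N" and det: "det (G * transpose_mat G) \<noteq> 0"
  shows "is_LCD N (row_code G)"
proof -
  have code: "row_code G = {transpose_mat G *\<^sub>v u | u. u \<in> carrier_vec k}"
    using G by (simp add: row_code_def)
  have zero: "transpose_mat G *\<^sub>v 0\<^sub>v k = 0\<^sub>v N"
    using G by (auto simp: scalar_prod_def)
  have "row_code G \<inter> dual_code N (row_code G) \<subseteq> {0\<^sub>v N}"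
  proof
    fix c assume c: "c \<in> row_code G \<inter> dual_code N (row_code G)"
    then obtain u where u: "u \<in> carrier_vec k" and cu: "c = transpose_mat G *\<^sub>v u"
      by (auto simp: code)
    have "(G * transpose_mat G) *\<^sub>v u = 0\<^sub>v k"
    proof (rule eq_vecI)
      fix i assume "i < dim_vec (0\<^sub>v k :: 'c vec)"
      then have i: "i < k" by simp
      have "transpose_mat G *\<^sub>v unit_vec k i \<in> row_code G"
        by (auto simp: code)
      then have "c \<bullet> (transpose_mat G *\<^sub>v unit_vec k i) = 0"
        using c by (simp add: dual_code_def)
      moreover have "c \<bullet> (transpose_mat G *\<^sub>v unit_vec k i)
          = (transpose_mat G *\<^sub>v unit_vec k i) \<bullet> c"
        using G u by (simp add: cu comm_scalar_prod[of _ N])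
      also have "\<dots> = unit_vec k i \<bullet> (G *\<^sub>v c)"
        using G u by (simp add: cu transpose_vec_mult_scalar)
      also have "\<dots> = ((G * transpose_mat G) *\<^sub>v u) $ i"
        using G u i by (simp add: cu)
      ultimately show "((G * transpose_mat G) *\<^sub>v u) $ i = 0\<^sub>v k $ i"
        using i by simp
    qed (use G in simp)
    then have "u = 0\<^sub>v k"
      using det_0_iff_vec_prod_zero[of "G * transpose_mat G" k] G u det by auto
    then show "c \<in> {0\<^sub>v N}"
      using cu zero by simp
  qed
  moreover have "0\<^sub>v N \<in> row_code G \<inter> dual_code N (row_code G)"
    using zero G by (auto simp: code dual_code_def intro!: exI[of _ "0\<^sub>v k"])
  ultimately show ?thesis
    unfolding is_LCD_def by blast
qed

lemma G_hat_carrier_mat: "G_hat n a b \<in> carrier_mat n (2 * n)"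
  by (simp add: G_hat_def)

lemma G_hat_mult_transpose:
  "G_hat n a b * transpose_mat (G_hat n a b) = 1\<^sub>m n + T_hat n a b * T_hat n a b"
proof (rule eq_matI)
  fix i j assume "i < dim_row (1\<^sub>m n + T_hat n a b * T_hat n a b)"
    "j < dim_col (1\<^sub>m n + T_hat n a b * T_hat n a b)"
  then have ij: "i < n" "j < n"
    by auto
  let ?G = "G_hat n a b" and ?T = "T_hat n a b"
  have left: "(\<Sum>l = 0..<n. ?G $$ (i, l) * ?G $$ (j, l))
      = (\<Sum>l = 0..<n. if l = i then (if i = j then 1 else 0) else 0)"
    using ij by (intro sum.cong) (auto simp: G_hat_def)
  have right: "(\<Sum>l = 0..<n. ?G $$ (i, l + n) * ?G $$ (j, l + n))
      = (\<Sum>l = 0..<n. ?T $$ (i, l) * ?T $$ (l, j))"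
    using ij by (intro sum.cong) (auto simp: G_hat_def T_hat_def)
  have "(?G * transpose_mat ?G) $$ (i, j) = (\<Sum>l = 0..<n + n. ?G $$ (i, l) * ?G $$ (j, l))"
    using ij by (simp add: G_hat_def scalar_prod_def mult_2)
  also have "\<dots> = (\<Sum>l = 0..<n. ?G $$ (i, l) * ?G $$ (j, l))
      + (\<Sum>l = 0..<n. ?G $$ (i, l + n) * ?G $$ (j, l + n))"
    by (simp add: sum.atLeastLessThan_concat[of 0 n "n + n", symmetric]
        sum.shift_bounds_nat_ivl[of _ 0 n n, simplified])
  also have "\<dots> = (1\<^sub>m n + ?T * ?T) $$ (i, j)"
    using ij by (simp add: left right scalar_prod_def)
  finally show "(?G * transpose_mat ?G) $$ (i, j) = (1\<^sub>m n + ?T * ?T) $$ (i, j)" .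
qed (simp_all add: G_hat_def)

lemma is_LCD_C_hat_if_det_nonzero:
  assumes "det (1\<^sub>m n + T_hat n a b * T_hat n a b) \<noteq> 0"
  shows "is_LCD (2 * n) (C_hat n a b)"
  unfolding C_hat_def
  using is_LCD_row_code_if_det_nonzero[OF G_hat_carrier_mat] assms
  by (simp add: G_hat_mult_transpose)

theorem corollary2p8:
  fixes a b :: "'a::{finite,field}"
    and emb :: "'a \<Rightarrow> 'b::{finite,field}"
    and \<mu> :: 'b
    and p q k n r m :: nat
  assumes p_prime: "prime p" and p_odd: "odd p"
    and q_def: "q = p ^ k" and k_pos: "k \<ge> 1"
    and card_a: "card (UNIV :: 'a set) = q"
    and card_b: "card (UNIV :: 'b set) = q ^ 2"
    and emb_add: "\<And>x y. emb (x + y) = emb x + emb y"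
    and emb_mult: "\<And>x y. emb (x * y) = emb x * emb y"
    and emb_one: "emb 1 = 1"
    and b_nz: "b \<noteq> 0"
    and n_ge: "n \<ge> 2"
    and r_div: "p ^ r dvd n + 1" and r_ndiv: "\<not> p ^ (r + 1) dvd n + 1"
    and m_def: "n + 1 = p ^ r * (m + 1)"
    and r_pos: "r \<ge> 1"
    and cond1: "q mod 4 = 1 \<Longrightarrow> gcd (m + 1) ((q^2 - 1) div 2) = 1"
    and cond3: "q mod 4 = 3 \<Longrightarrow> gcd (m + 1) ((q^4 - 1) div 2) dvd (q - 1) div 2"
    and mu_sq: "\<mu> ^ 2 = - 1"
    and a_notin: "emb a \<notin> {\<mu> + 2 * emb b, \<mu> - 2 * emb b, - \<mu> + 2 * emb b, - \<mu> - 2 * emb b}"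
  shows "is_LCD (2 * n) (C_hat n a b)"
proof -
  let ?\<phi> = "to_ac \<circ> emb :: 'a \<Rightarrow> 'b alg_closure"
  have "emb 0 = 0"
    using emb_add[of 0 0] by (metis add.right_neutral add_left_cancel)
  then interpret \<phi>: field_hom ?\<phi>
    by unfold_locales (simp_all add: emb_add emb_mult emb_one)
  have char: "CHAR('b alg_closure) = p"
    using CHAR_eq_if_card_eq_prime_power[OF p_prime, of "2 * k"] card_b q_def
    by (simp add: power_mult mult.commute)
  have fixed: "?\<phi> x ^ q = ?\<phi> x" for x
    using \<phi>.hom_power[of x q] power_card_UNIV_eq_self[of x] card_a by simp
  have "?\<phi> a \<notin> to_ac ` {\<mu> + 2 * emb b, \<mu> - 2 * emb b, - \<mu> + 2 * emb b, - \<mu> - 2 * emb b}"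
    using a_notin by (simp only: comp_apply inj_image_mem_iff[OF inj_to_ac] not_False_eq_True)
  then have "?\<phi> a \<notin> {to_ac \<mu> + 2 * ?\<phi> b, to_ac \<mu> - 2 * ?\<phi> b,
      - to_ac \<mu> + 2 * ?\<phi> b, - to_ac \<mu> - 2 * ?\<phi> b}"
    by simp
  moreover have "?\<phi> b \<noteq> 0"
    using \<phi>.hom_0_iff b_nz by blast
  moreover have "to_ac \<mu> ^ 2 = - 1"
    using mu_sq by (simp flip: to_ac_power)
  ultimately have "det (1\<^sub>m n + T_hat n (?\<phi> a) (?\<phi> b) * T_hat n (?\<phi> a) (?\<phi> b)) \<noteq> 0"
    using det_one_add_square_T_hat_nonzero[OF p_prime char p_odd q_def m_def cond1 cond3 fixed fixed]
    by blast
  then have "det (1\<^sub>m n + T_hat n a b * T_hat n a b) \<noteq> 0"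
    by (metis \<phi>.hom_det_one_add_square_T_hat \<phi>.hom_0_iff)
  then show ?thesis
    by (rule is_LCD_C_hat_if_det_nonzero)
qed

end
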